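(* For $A\in\mathcal A_n$, the following are equivalent: (1) $A$ is (the permutation matrix of) a bigrassmannian permutation; (2) $A$ has exactly one essential point.
   Context: $\mathcal A_n$ is the set of $n\times n$ alternating sign matrices (entries in $\{-1,0,1\}$, partial row and column sums in $\{0,1\}$, full row and column sums $1$); a permutation $w\in S_n$ is identified with its permutation matrix (entry $1$ at $(i,w(i))$). A permutation $w\in S_n$ is bigrassmannian if there is exactly one $i\in[n-1]$ with $w^{-1}(i)>w^{-1}(i+1)$ and exactly one $j\in[n-1]$ with $w(j)>w(j+1)$. The corner sum matrix is $\widetilde A(i,j)=\sum_{p\le i,q\le j}a_{pq}$, with $\widetilde A(i,j)=0$ if $i=0$ or $j=0$. For $i<j$, $k<l$, $R_{ij}^{kl}=\{(p,q): i\le p<j,\ k\le q<l\}$ is an essential rectangle of $A$ if for all $(p,q)\in R_{ij}^{kl}$: $\widetilde A(p,k)=\widetilde A(p,k-1)$, $\widetilde A(p,l)=\widetilde A(p,l-1)+1$, $\widetilde A(i,q)=\widetilde A(i-1,q)$, $\widetilde A(j,q)=\widetilde A(j-1,q)+1$. An essential point is an essential rectangle with $j=i+1$, $l=k+1$. *)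

theory Defs
  imports "HOL-Combinatorics.Permutations"
begin

(* n x n integer matrices are functions nat => nat => int, indexed by 1..n,
   with all entries outside [1..n] x [1..n] equal to 0. *)

definition is_asm :: "nat \<Rightarrow> (nat \<Rightarrow> nat \<Rightarrow> int) \<Rightarrow> bool" where
  "is_asm n A \<longleftrightarrow>
     (\<forall>i j. (i \<notin> {1..n} \<or> j \<notin> {1..n}) \<longrightarrow> A i j = 0) \<and>
     (\<forall>i\<in>{1..n}. \<forall>j\<in>{1..n}. A i j \<in> {-1, 0, 1}) \<and>
     (\<forall>i\<in>{1..n}. \<forall>j\<in>{1..n}. (\<Sum>q=1..j. A i q) \<in> {0, 1}) \<and>
     (\<forall>i\<in>{1..n}. \<forall>j\<in>{1..n}. (\<Sum>p=1..i. A p j) \<in> {0, 1}) \<and>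
     (\<forall>i\<in>{1..n}. (\<Sum>q=1..n. A i q) = 1) \<and>
     (\<forall>j\<in>{1..n}. (\<Sum>p=1..n. A p j) = 1)"

definition perm_mat :: "nat \<Rightarrow> (nat \<Rightarrow> nat) \<Rightarrow> nat \<Rightarrow> nat \<Rightarrow> int" where
  "perm_mat n w i j = (if i \<in> {1..n} \<and> j \<in> {1..n} \<and> w i = j then 1 else 0)"

definition bigrassmannian :: "nat \<Rightarrow> (nat \<Rightarrow> nat) \<Rightarrow> bool" where
  "bigrassmannian n w \<longleftrightarrow>
     card {i \<in> {1..<n}. inv w i > inv w (i + 1)} = 1 \<and>
     card {j \<in> {1..<n}. w j > w (j + 1)} = 1"

definition corner_sum :: "(nat \<Rightarrow> nat \<Rightarrow> int) \<Rightarrow> nat \<Rightarrow> nat \<Rightarrow> int" where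
  "corner_sum A i j = (\<Sum>p=1..i. \<Sum>q=1..j. A p q)"

definition essential_rect :: "nat \<Rightarrow> (nat \<Rightarrow> nat \<Rightarrow> int) \<Rightarrow> nat \<Rightarrow> nat \<Rightarrow> nat \<Rightarrow> nat \<Rightarrow> bool" where
  "essential_rect n A i j k l \<longleftrightarrow>
     1 \<le> i \<and> i < j \<and> j \<le> n \<and> 1 \<le> k \<and> k < l \<and> l \<le> n \<and>
     (\<forall>p\<in>{i..<j}. \<forall>q\<in>{k..<l}.
        corner_sum A p k = corner_sum A p (k - 1) \<and>
        corner_sum A p l = corner_sum A p (l - 1) + 1 \<and>
        corner_sum A i q = corner_sum A (i - 1) q \<and>
        corner_sum A j q = corner_sum A (j - 1) q + 1)"

definition essential_points :: "nat \<Rightarrow> (nat \<Rightarrow> nat \<Rightarrow> int) \<Rightarrow> (nat \<times> nat) set" where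
  "essential_points n A = {(i, k). essential_rect n A i (i + 1) k (k + 1)}"

end

theory Submission
  imports Defs
begin

text \<open>
  In an alternating sign matrix all row and column prefix sums lie in \<open>{0, 1}\<close>, and \<open>(i, k)\<close>
  is an essential point exactly when the column prefix sums at \<open>(i, k)\<close>, \<open>(i, k + 1)\<close> are \<open>0, 1\<close>
  and the row prefix sums at \<open>(i, k)\<close>, \<open>(i + 1, k)\<close> are \<open>0, 1\<close>.
  An entry \<open>-1\<close> at \<open>(P, Q)\<close> leaves row prefix \<open>1\<close> just left of it and column prefix \<open>1\<close> just above
  it, and both prefix sums \<open>0\<close> at \<open>(P, Q)\<close> itself. Each of these two configurations is either an
  essential point or survives a step up or left (respectively down or right), so walking north-west
  and south-east from the \<open>-1\<close> yields two distinct essential points. Hence a matrix with a single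
  essential point is a permutation matrix of some \<open>w\<close>, and there the rows of the essential points
  are exactly the descents of \<open>w\<close> and their columns exactly the descents of \<open>w\<^sup>-\<^sup>1\<close>.
\<close>

definition row_prefix :: "(nat \<Rightarrow> nat \<Rightarrow> int) \<Rightarrow> nat \<Rightarrow> nat \<Rightarrow> int" where
  "row_prefix A i k = (\<Sum>q=1..k. A i q)"

definition col_prefix :: "(nat \<Rightarrow> nat \<Rightarrow> int) \<Rightarrow> nat \<Rightarrow> nat \<Rightarrow> int" where
  "col_prefix A i k = (\<Sum>p=1..i. A p k)"

definition descents :: "nat \<Rightarrow> (nat \<Rightarrow> nat) \<Rightarrow> nat set" where
  "descents n w = {j \<in> {1..<n}. w j > w (j + 1)}"

lemma row_prefix_0 [simp]: "row_prefix A i 0 = 0"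
  by (simp add: row_prefix_def)

lemma col_prefix_0 [simp]: "col_prefix A 0 k = 0"
  by (simp add: col_prefix_def)

lemma row_prefix_Suc: "row_prefix A i (Suc k) = row_prefix A i k + A i (Suc k)"
  by (simp add: row_prefix_def)

lemma col_prefix_Suc: "col_prefix A (Suc i) k = col_prefix A i k + A (Suc i) k"
  by (simp add: col_prefix_def)

lemma corner_sum_Suc_col: "corner_sum A p (Suc k) = corner_sum A p k + col_prefix A p (Suc k)"
  by (simp add: corner_sum_def col_prefix_def sum.distrib)

lemma corner_sum_Suc_row: "corner_sum A (Suc p) k = corner_sum A p k + row_prefix A (Suc p) k"
  by (simp add: corner_sum_def row_prefix_def)

lemma essential_points_iff:
  "(i, k) \<in> essential_points n A \<longleftrightarrow>
     1 \<le> i \<and> i < n \<and> 1 \<le> k \<and> k < n \<and>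
     col_prefix A i k = 0 \<and> col_prefix A i (k + 1) = 1 \<and>
     row_prefix A i k = 0 \<and> row_prefix A (i + 1) k = 1"
proof (cases "1 \<le> i \<and> 1 \<le> k")
  case True
  then have "corner_sum A i k = corner_sum A i (k - 1) + col_prefix A i k"
    "corner_sum A i (k + 1) = corner_sum A i k + col_prefix A i (k + 1)"
    "corner_sum A i k = corner_sum A (i - 1) k + row_prefix A i k"
    "corner_sum A (i + 1) k = corner_sum A i k + row_prefix A (i + 1) k"
    using corner_sum_Suc_col[of A i "k - 1"] corner_sum_Suc_col[of A i k]
      corner_sum_Suc_row[of A "i - 1" k] corner_sum_Suc_row[of A i k] by simp_all
  moreover have "{i..<i + 1} = {i}" "{k..<k + 1} = {k}" by auto
  ultimately show ?thesis
    unfolding essential_points_def essential_rect_def using True by auto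
qed (auto simp: essential_points_def essential_rect_def)

lemma finite_essential_points: "finite (essential_points n A)"
proof (rule finite_subset)
  show "essential_points n A \<subseteq> {1..n} \<times> {1..n}"
    by (auto simp: essential_points_iff)
qed simp

lemma is_asm_outside:
  "is_asm n A \<Longrightarrow> i \<notin> {1..n} \<or> j \<notin> {1..n} \<Longrightarrow> A i j = 0"
  unfolding is_asm_def by blast

lemma is_asm_row_prefix:
  assumes "is_asm n A" "k \<le> n"
  shows "row_prefix A i k \<in> {0, 1}"
proof (cases "i \<in> {1..n} \<and> 1 \<le> k")
  case True
  then show ?thesis using assms unfolding is_asm_def row_prefix_def by auto
next
  case False
  then have "row_prefix A i k = 0"
    using is_asm_outside[OF assms(1)] by (auto simp: row_prefix_def)
  then show ?thesis by simp
qed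

lemma is_asm_col_prefix:
  assumes "is_asm n A" "i \<le> n"
  shows "col_prefix A i k \<in> {0, 1}"
proof (cases "k \<in> {1..n} \<and> 1 \<le> i")
  case True
  then show ?thesis using assms unfolding is_asm_def col_prefix_def by auto
next
  case False
  then have "col_prefix A i k = 0"
    using is_asm_outside[OF assms(1)] by (auto simp: col_prefix_def)
  then show ?thesis by simp
qed

lemma is_asm_row_prefix_full: "is_asm n A \<Longrightarrow> i \<in> {1..n} \<Longrightarrow> row_prefix A i n = 1"
  unfolding is_asm_def row_prefix_def by blast

lemma is_asm_col_prefix_full: "is_asm n A \<Longrightarrow> k \<in> {1..n} \<Longrightarrow> col_prefix A n k = 1"
  unfolding is_asm_def col_prefix_def by blast

lemma is_asm_essential_point_northwest:
  assumes A: "is_asm n A"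
    and "i + 1 \<le> n" "k + 1 \<le> n"
    and "row_prefix A (i + 1) k = 1" "col_prefix A i (k + 1) = 1"
  shows "\<exists>i' k'. (i', k') \<in> essential_points n A \<and> i' \<le> i \<and> k' \<le> k"
  using assms(2-)
proof (induction "i + k" arbitrary: i k rule: less_induct)
  case less
  obtain i0 where i: "i = Suc i0" using less.prems(4) by (cases i) auto
  obtain k0 where k: "k = Suc k0" using less.prems(3) by (cases k) auto
  have row: "row_prefix A i k \<in> {0, 1}" "row_prefix A i (Suc k) \<in> {0, 1}"
    "row_prefix A (Suc i) k0 \<in> {0, 1}"
    using is_asm_row_prefix[OF A] less.prems k by auto
  have col: "col_prefix A i k \<in> {0, 1}" "col_prefix A (Suc i) k \<in> {0, 1}"
    "col_prefix A i0 (Suc k) \<in> {0, 1}"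
    using is_asm_col_prefix[OF A] less.prems i by auto
  consider "row_prefix A i k = 0" "col_prefix A i k = 0"
    | "row_prefix A i k = 1" | "col_prefix A i k = 1"
    using row col by auto
  then show ?case
  proof cases
    case 1
    then have "(i, k) \<in> essential_points n A"
      using less.prems i k by (simp add: essential_points_iff)
    then show ?thesis by blast
  next
    case 2
    text \<open>Then \<open>A i (k + 1) \<le> 0\<close>, so the column prefix one row higher is still \<open>1\<close>.\<close>
    have "col_prefix A i0 (k + 1) = 1"
      using row col 2 less.prems(4) row_prefix_Suc[of A i k] col_prefix_Suc[of A i0 "Suc k"]
      by (auto simp: i)
    then obtain i' k' where "(i', k') \<in> essential_points n A" "i' \<le> i0" "k' \<le> k"
      using less.hyps[of i0 k] less.prems 2 i by auto
    then show ?thesis using i by (intro exI[of _ i'] exI[of _ k']) simp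
  next
    case 3
    have "row_prefix A (i + 1) k0 = 1"
      using row col 3 less.prems(3) col_prefix_Suc[of A i k] row_prefix_Suc[of A "Suc i" k0]
      by (auto simp: k)
    then obtain i' k' where "(i', k') \<in> essential_points n A" "i' \<le> i" "k' \<le> k0"
      using less.hyps[of i k0] less.prems 3 k by auto
    then show ?thesis using k by (intro exI[of _ i'] exI[of _ k']) simp
  qed
qed

lemma is_asm_essential_point_southeast:
  assumes A: "is_asm n A"
    and "1 \<le> i" "1 \<le> k" "i \<le> n" "k \<le> n"
    and "row_prefix A i k = 0" "col_prefix A i k = 0"
  shows "\<exists>i' k'. (i', k') \<in> essential_points n A \<and> i \<le> i' \<and> k \<le> k'"
  using assms(2-)
proof (induction "(n - i) + (n - k)" arbitrary: i k rule: less_induct)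
  case less
  have i: "i < n" using is_asm_col_prefix_full[OF A, of k] less.prems by (cases "i = n") auto
  have k: "k < n" using is_asm_row_prefix_full[OF A, of i] less.prems by (cases "k = n") auto
  obtain i0 where i0: "i = Suc i0" using less.prems(1) by (cases i) auto
  obtain k0 where k0: "k = Suc k0" using less.prems(2) by (cases k) auto
  have row: "row_prefix A (i + 1) k \<in> {0, 1}" "row_prefix A (Suc i) k0 \<in> {0, 1}"
    "row_prefix A i (Suc k) \<in> {0, 1}"
    using is_asm_row_prefix[OF A, of k] is_asm_row_prefix[OF A, of k0]
      is_asm_row_prefix[OF A, of "Suc k"] k k0 by auto
  have col: "col_prefix A i (k + 1) \<in> {0, 1}" "col_prefix A (Suc i) k \<in> {0, 1}"
    "col_prefix A i0 (Suc k) \<in> {0, 1}"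
    using is_asm_col_prefix[OF A] less.prems i k i0 by auto
  consider "row_prefix A (i + 1) k = 1" "col_prefix A i (k + 1) = 1"
    | "row_prefix A (i + 1) k = 0" | "col_prefix A i (k + 1) = 0"
    using row col by auto
  then show ?case
  proof cases
    case 1
    then have "(i, k) \<in> essential_points n A"
      using less.prems i k by (simp add: essential_points_iff)
    then show ?thesis by blast
  next
    case 2
    have "col_prefix A (i + 1) k = 0"
      using row col 2 less.prems(6) row_prefix_Suc[of A "Suc i" k0] col_prefix_Suc[of A i k]
      by (auto simp: k0)
    then obtain i' k' where "(i', k') \<in> essential_points n A" "i + 1 \<le> i'" "k \<le> k'"
      using less.hyps[of "i + 1" k] less.prems i 2 by fastforce
    then show ?thesis by (intro exI[of _ i'] exI[of _ k']) simp
  next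
    case 3
    have "row_prefix A i (k + 1) = 0"
      using row col 3 less.prems(5) col_prefix_Suc[of A i0 "Suc k"] row_prefix_Suc[of A i k]
      by (auto simp: i0)
    then obtain i' k' where "(i', k') \<in> essential_points n A" "i \<le> i'" "k + 1 \<le> k'"
      using less.hyps[of i "k + 1"] less.prems k 3 by fastforce
    then show ?thesis by (intro exI[of _ i'] exI[of _ k']) simp
  qed
qed

lemma card_essential_points_ge_2_if_neg_entry:
  assumes A: "is_asm n A" and neg: "A P Q = -1"
  shows "card (essential_points n A) \<ge> 2"
proof -
  have "P \<in> {1..n}" "Q \<in> {1..n}" using is_asm_outside[OF A, of P Q] neg by auto
  then obtain P0 Q0 where P: "P = Suc P0" "P \<le> n" and Q: "Q = Suc Q0" "Q \<le> n"
    by (metis atLeastAtMost_iff not0_implies_Suc not_one_le_zero)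
  have "row_prefix A P Q0 \<in> {0, 1}" "row_prefix A P Q \<in> {0, 1}"
    "col_prefix A P0 Q \<in> {0, 1}" "col_prefix A P Q \<in> {0, 1}"
    using is_asm_row_prefix[OF A] is_asm_col_prefix[OF A] P Q by auto
  then have "row_prefix A P Q0 = 1" "row_prefix A P Q = 0"
    "col_prefix A P0 Q = 1" "col_prefix A P Q = 0"
    using neg row_prefix_Suc[of A P Q0] col_prefix_Suc[of A P0 Q] by (auto simp: P Q)
  then obtain i1 k1 i2 k2 where
    "(i1, k1) \<in> essential_points n A" "i1 \<le> P0"
    "(i2, k2) \<in> essential_points n A" "P \<le> i2"
    using is_asm_essential_point_northwest[OF A, of P0 Q0]
      is_asm_essential_point_southeast[OF A, of P Q] P Q by auto
  moreover from this have "card {(i1, k1), (i2, k2)} = 2" using P by auto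
  ultimately show ?thesis
    using card_mono[OF finite_essential_points, of "{(i1, k1), (i2, k2)}"] by auto
qed

lemma ex1_eq_1_if_sum_01_eq_1:
  fixes f :: "'a \<Rightarrow> int"
  assumes "finite S" "\<forall>x\<in>S. f x \<in> {0, 1}" "sum f S = 1"
  shows "\<exists>!x. x \<in> S \<and> f x = 1"
proof -
  have "sum f S = (\<Sum>x\<in>S. if f x = 1 then 1 else 0)"
    using assms(2) by (intro sum.cong) auto
  also have "\<dots> = int (card {x \<in> S. f x = 1})"
    using assms(1) by (simp add: sum.If_cases Int_def)
  finally have "card {x \<in> S. f x = 1} = 1" using assms(3) by simp
  then obtain a where "{x \<in> S. f x = 1} = {a}" by (auto simp: card_1_singleton_iff)
  then show ?thesis by (metis (mono_tags, lifting) mem_Collect_eq singletonD singletonI)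
qed

lemma is_asm_perm_mat_if_no_neg_entry:
  assumes A: "is_asm n A" and no_neg: "\<forall>i j. A i j \<noteq> -1"
  shows "\<exists>w. w permutes {1..n} \<and> A = perm_mat n w"
proof -
  have entry: "A i j \<in> {0, 1}" if "i \<in> {1..n}" "j \<in> {1..n}" for i j
    using A no_neg that unfolding is_asm_def by blast
  have row: "\<exists>!j. j \<in> {1..n} \<and> A i j = 1" if "i \<in> {1..n}" for i
    using A that entry by (intro ex1_eq_1_if_sum_01_eq_1) (auto simp: is_asm_def)
  have col: "\<exists>!i. i \<in> {1..n} \<and> A i j = 1" if "j \<in> {1..n}" for j
    using A that entry by (intro ex1_eq_1_if_sum_01_eq_1) (auto simp: is_asm_def)
  define w where "w i = (if i \<in> {1..n} then (THE j. j \<in> {1..n} \<and> A i j = 1) else i)" for i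
  have w: "w i \<in> {1..n} \<and> A i (w i) = 1" if "i \<in> {1..n}" for i
    using theI'[OF row[OF that]] that by (simp add: w_def)
  have "inj_on w {1..n}"
    by (rule inj_onI) (metis w col)
  moreover have "w ` {1..n} \<subseteq> {1..n}" using w by blast
  ultimately have "bij_betw w {1..n} {1..n}"
    by (simp add: bij_betw_def endo_inj_surj)
  then have perm: "w permutes {1..n}"
    by (rule bij_imp_permutes) (auto simp: w_def)
  have "A i j = perm_mat n w i j" for i j
  proof (cases "i \<in> {1..n} \<and> j \<in> {1..n}")
    case True
    then show ?thesis using w[of i] row[of i] entry[of i j] by (auto simp: perm_mat_def)
  next
    case False
    then show ?thesis using is_asm_outside[OF A, of i j] by (auto simp: perm_mat_def)
  qed
  then show ?thesis using perm by blast
qed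

lemma row_prefix_perm_mat:
  assumes "w permutes {1..n}" "i \<in> {1..n}"
  shows "row_prefix (perm_mat n w) i k = (if w i \<le> k then 1 else 0)"
proof -
  have "w i \<in> {1..n}" using permutes_in_image[OF assms(1)] assms(2) by simp
  then have "perm_mat n w i q = (if w i = q then 1 else 0)" for q
    using assms(2) by (auto simp: perm_mat_def)
  then have "row_prefix (perm_mat n w) i k = (\<Sum>q=1..k. if w i = q then 1 else 0)"
    by (simp add: row_prefix_def)
  also have "\<dots> = (if w i \<le> k then 1 else 0)" using \<open>w i \<in> {1..n}\<close> by simp
  finally show ?thesis .
qed

lemma col_prefix_perm_mat:
  assumes w: "w permutes {1..n}" and k: "k \<in> {1..n}"
  shows "col_prefix (perm_mat n w) i k = (if inv w k \<le> i then 1 else 0)"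
proof -
  have "inv w k \<in> {1..n}" using permutes_in_image[OF permutes_inv[OF w]] k by simp
  moreover have "perm_mat n w p k = (if inv w k = p then 1 else 0)" for p
  proof -
    have "p \<in> {1..n} \<and> w p = k \<longleftrightarrow> inv w k = p"
      using \<open>inv w k \<in> {1..n}\<close> permutes_inverses[OF w] by metis
    then show ?thesis using k by (simp add: perm_mat_def)
  qed
  ultimately have "col_prefix (perm_mat n w) i k = (\<Sum>p=1..i. if inv w k = p then 1 else 0)"
    by (simp add: col_prefix_def)
  also have "\<dots> = (if inv w k \<le> i then 1 else 0)" using \<open>inv w k \<in> {1..n}\<close> by simp
  finally show ?thesis .
qed

lemma essential_points_perm_mat_iff:
  assumes w: "w permutes {1..n}"
  shows "(i, k) \<in> essential_points n (perm_mat n w) \<longleftrightarrow>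
    1 \<le> i \<and> i < n \<and> 1 \<le> k \<and> k < n \<and>
    w (i + 1) \<le> k \<and> k < w i \<and> inv w (k + 1) \<le> i \<and> i < inv w k"
  using row_prefix_perm_mat[OF w, of i k] row_prefix_perm_mat[OF w, of "i + 1" k]
    col_prefix_perm_mat[OF w, of k i] col_prefix_perm_mat[OF w, of "k + 1" i]
  by (auto simp: essential_points_iff not_le split: if_splits)

text \<open>A discrete intermediate value argument: \<open>i < inv s k\<close> holds at \<open>k = s (i + 1)\<close> and fails at \<open>k = s i\<close>.\<close>
lemma descent_crossing:
  assumes s: "s permutes {1..n}" and i: "i \<in> descents n s"
  shows "\<exists>k. s (i + 1) \<le> k \<and> k < s i \<and> inv s (k + 1) \<le> i \<and> i < inv s k"
proof (rule ccontr)
  assume no_crossing: "\<not> ?thesis"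
  have "inv s (s (i + 1)) = i + 1" "inv s (s i) = i"
    using permutes_inverses(2)[OF s] by simp_all
  moreover have "s (i + 1) \<le> s i" using i by (simp add: descents_def)
  ultimately have "i < inv s (s i)"
    using dec_induct[of "s (i + 1)" "s i" "\<lambda>k. i < inv s k"] no_crossing
    by (metis Suc_eq_plus1 less_add_one not_le)
  then show False using \<open>inv s (s i) = i\<close> by simp
qed

lemma fst_image_essential_points_perm_mat:
  assumes w: "w permutes {1..n}"
  shows "fst ` essential_points n (perm_mat n w) = descents n w"
proof
  show "fst ` essential_points n (perm_mat n w) \<subseteq> descents n w"
    by (auto simp: essential_points_perm_mat_iff[OF w] descents_def)
next
  show "descents n w \<subseteq> fst ` essential_points n (perm_mat n w)"
  proof
    fix i assume i: "i \<in> descents n w"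
    then have "i \<in> {1..n}" "i + 1 \<in> {1..n}" by (auto simp: descents_def)
    then have "w (i + 1) \<in> {1..n}" "w i \<in> {1..n}"
      using permutes_in_image[OF w] by simp_all
    moreover obtain k where "w (i + 1) \<le> k" "k < w i" "inv w (k + 1) \<le> i" "i < inv w k"
      using descent_crossing[OF w i] by blast
    ultimately have "(i, k) \<in> essential_points n (perm_mat n w)"
      using \<open>i \<in> {1..n}\<close> \<open>i + 1 \<in> {1..n}\<close>
      by (simp add: essential_points_perm_mat_iff[OF w])
    then show "i \<in> fst ` essential_points n (perm_mat n w)" by force
  qed
qed

lemma snd_image_essential_points_perm_mat:
  assumes w: "w permutes {1..n}"
  shows "snd ` essential_points n (perm_mat n w) = descents n (inv w)"
proof
  show "snd ` essential_points n (perm_mat n w) \<subseteq> descents n (inv w)"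
    by (auto simp: essential_points_perm_mat_iff[OF w] descents_def)
next
  have w': "inv w permutes {1..n}" and inv_inv: "inv (inv w) = w"
    using permutes_inv[OF w] permutes_inv_inv[OF w] .
  show "descents n (inv w) \<subseteq> snd ` essential_points n (perm_mat n w)"
  proof
    fix k assume k: "k \<in> descents n (inv w)"
    then have "k \<in> {1..n}" "k + 1 \<in> {1..n}" by (auto simp: descents_def)
    then have "inv w (k + 1) \<in> {1..n}" "inv w k \<in> {1..n}"
      using permutes_in_image[OF w'] by simp_all
    moreover obtain i where "inv w (k + 1) \<le> i" "i < inv w k" "w (i + 1) \<le> k" "k < w i"
      using descent_crossing[OF w' k] unfolding inv_inv by blast
    ultimately have "(i, k) \<in> essential_points n (perm_mat n w)"
      using \<open>k \<in> {1..n}\<close> \<open>k + 1 \<in> {1..n}\<close>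
      by (simp add: essential_points_perm_mat_iff[OF w])
    then show "k \<in> snd ` essential_points n (perm_mat n w)" by force
  qed
qed

lemma card_eq_1_iff_card_fst_snd_image:
  "card E = 1 \<longleftrightarrow> card (fst ` E) = 1 \<and> card (snd ` E) = 1"
proof
  assume "card E = 1"
  then show "card (fst ` E) = 1 \<and> card (snd ` E) = 1" by (auto simp: card_1_singleton_iff)
next
  assume "card (fst ` E) = 1 \<and> card (snd ` E) = 1"
  then obtain a b where "fst ` E = {a}" "snd ` E = {b}" by (auto simp: card_1_singleton_iff)
  then have "E = {(a, b)}" by force
  then show "card E = 1" by simp
qed

lemma card_essential_points_perm_mat_eq_1_iff:
  assumes "w permutes {1..n}"
  shows "card (essential_points n (perm_mat n w)) = 1 \<longleftrightarrow> bigrassmannian n w"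
  unfolding card_eq_1_iff_card_fst_snd_image fst_image_essential_points_perm_mat[OF assms]
    snd_image_essential_points_perm_mat[OF assms] bigrassmannian_def descents_def
  by blast

theorem mainTheorem8:
  fixes n :: nat and A :: "nat \<Rightarrow> nat \<Rightarrow> int"
  assumes "is_asm n A"
  shows "(\<exists>w. w permutes {1..n} \<and> bigrassmannian n w \<and> A = perm_mat n w)
         \<longleftrightarrow> card (essential_points n A) = 1"
proof
  assume "\<exists>w. w permutes {1..n} \<and> bigrassmannian n w \<and> A = perm_mat n w"
  then show "card (essential_points n A) = 1"
    using card_essential_points_perm_mat_eq_1_iff by auto
next
  assume one: "card (essential_points n A) = 1"
  have "\<forall>i j. A i j \<noteq> -1"
  proof (intro allI notI)
    fix i j assume "A i j = -1"
    then show False using card_essential_points_ge_2_if_neg_entry[OF assms] one by simp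
  qed
  then obtain w where "w permutes {1..n}" "A = perm_mat n w"
    using is_asm_perm_mat_if_no_neg_entry[OF assms] by blast
  then show "\<exists>w. w permutes {1..n} \<and> bigrassmannian n w \<and> A = perm_mat n w"
    using one card_essential_points_perm_mat_eq_1_iff by blast
qed

end
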